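(* Let $K\subseteq\mathbb{R}^n$ be a nonempty compact set, let $\mathbf{c}\in\mathbb{Z}^n$, let $F:=F_K(\mathbf{c})$, and assume $h_K(\mathbf{c})\in\mathbb{Z}$. Then for every $\mathbf{a}\in\mathbb{Z}^n$ there exists $N\ge0$ such that $$H^{\rm cg}_K(\mathbf{a}+i\mathbf{c})\cap H^=_K(\mathbf{c}) = H^{\rm cg}_F(\mathbf{a})\cap H^=_K(\mathbf{c})\quad\text{for all integers } i\ge N.$$
   Context: $h_K(\mathbf{a})=\sup_{\mathbf{x}\in K}\mathbf{a}\mathbf{x}$ (with $h_\emptyset\equiv-\infty$). For nonempty compact $K$: $H^=_K(\mathbf{a}):=\{\mathbf{x}\in\mathbb{R}^n:\mathbf{a}\mathbf{x}=h_K(\mathbf{a})\}$ and $F_K(\mathbf{a}):=K\cap H^=_K(\mathbf{a})$. For $\mathbf{a}\in\mathbb{Z}^n$, the CG cut of $K$ induced by $\mathbf{a}$ is the halfspace $H^{\rm cg}_K(\mathbf{a}):=\{\mathbf{x}\in\mathbb{R}^n:\mathbf{a}\mathbf{x}\le\lfloor h_K(\mathbf{a})\rfloor\}$. *)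

theory Defs
  imports "HOL-Analysis.Analysis"
begin

definition int_vec :: "real^'n \<Rightarrow> bool" where
  "int_vec a \<longleftrightarrow> (\<forall>j. a $ j \<in> \<int>)"

definition supp_fun :: "(real^'n) set \<Rightarrow> real^'n \<Rightarrow> real" where
  "supp_fun K a = Sup ((\<lambda>x. a \<bullet> x) ` K)"

definition supp_hyperplane :: "(real^'n) set \<Rightarrow> real^'n \<Rightarrow> (real^'n) set" where
  "supp_hyperplane K a = {x. a \<bullet> x = supp_fun K a}"

definition face_of_dir :: "(real^'n) set \<Rightarrow> real^'n \<Rightarrow> (real^'n) set" where
  "face_of_dir K a = K \<inter> supp_hyperplane K a"

definition cg_cut :: "(real^'n) set \<Rightarrow> real^'n \<Rightarrow> (real^'n) set" where
  "cg_cut K a = {x. a \<bullet> x \<le> of_int \<lfloor>supp_fun K a\<rfloor>}"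

end

theory Submission
  imports Defs
begin

text \<open>Write \<open>h = h\<^sub>K(c)\<close> and \<open>F = F\<^sub>K(c)\<close>. For every \<open>t\<close>, a maximiser of \<open>a\<close> over \<open>F\<close>
  gives \<open>h\<^sub>K(a + t c) \<ge> h\<^sub>F(a) + t h\<close>. Conversely, fix \<open>s > h\<^sub>F(a)\<close>: by compactness the
  points of \<open>K\<close> with \<open>a x \<ge> s\<close> stay a distance \<open>\<delta> > 0\<close> below the hyperplane \<open>c x = h\<close>, so for
  large \<open>t\<close> the penalty \<open>t \<delta>\<close> outweighs their gain in \<open>a x\<close> and \<open>h\<^sub>K(a + t c) < s + t h\<close>.
  Taking \<open>s = \<lfloor>h\<^sub>F(a)\<rfloor> + 1\<close> and \<open>t = i\<close> integral, with \<open>h\<close> integral, pins down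
  \<open>\<lfloor>h\<^sub>K(a + i c)\<rfloor> = \<lfloor>h\<^sub>F(a)\<rfloor> + i h\<close>, and on the hyperplane \<open>c x = h\<close> the two cuts then
  coincide.\<close>

lemma supp_fun_attained:
  fixes K :: "(real^'n) set"
  assumes "K \<noteq> {}" "compact K"
  obtains x where "x \<in> K" "supp_fun K v = v \<bullet> x" "\<And>y. y \<in> K \<Longrightarrow> v \<bullet> y \<le> v \<bullet> x"
proof -
  have "compact ((\<lambda>x. v \<bullet> x) ` K)"
    by (intro compact_continuous_image assms continuous_intros)
  then obtain x where x: "x \<in> K" "\<forall>y\<in>K. v \<bullet> y \<le> v \<bullet> x"
    using compact_attains_sup[of "(\<lambda>x. v \<bullet> x) ` K"] assms(1) by auto
  moreover have "supp_fun K v = v \<bullet> x"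
    unfolding supp_fun_def using x by (intro cSup_eq_maximum) auto
  ultimately show ?thesis using that by blast
qed

lemma supp_fun_upper:
  fixes K :: "(real^'n) set"
  assumes "compact K" "x \<in> K"
  shows "v \<bullet> x \<le> supp_fun K v"
proof -
  obtain z where "supp_fun K v = v \<bullet> z" "\<And>y. y \<in> K \<Longrightarrow> v \<bullet> y \<le> v \<bullet> z"
    using supp_fun_attained[of K v] assms by blast
  with assms(2) show ?thesis by simp
qed

lemma face_of_dir_eq:
  "face_of_dir K c = K \<inter> {x. c \<bullet> x = supp_fun K c}"
  unfolding face_of_dir_def supp_hyperplane_def by simp

lemma compact_face_of_dir:
  fixes K :: "(real^'n) set"
  assumes "compact K"
  shows "compact (face_of_dir K c)"
  unfolding face_of_dir_eq using assms closed_hyperplane by (intro compact_Int_closed)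

lemma face_of_dir_nonempty:
  fixes K :: "(real^'n) set"
  assumes "K \<noteq> {}" "compact K"
  shows "face_of_dir K c \<noteq> {}"
proof -
  obtain x where "x \<in> K" "supp_fun K c = c \<bullet> x"
    using supp_fun_attained[OF assms, of c] by blast
  then show ?thesis unfolding face_of_dir_eq by auto
qed

lemma supp_fun_face_plus_le:
  fixes K :: "(real^'n) set"
  assumes "K \<noteq> {}" "compact K"
  shows "supp_fun (face_of_dir K c) a + t * supp_fun K c \<le> supp_fun K (a + t *\<^sub>R c)"
proof -
  obtain x where x: "x \<in> face_of_dir K c" "supp_fun (face_of_dir K c) a = a \<bullet> x"
    using supp_fun_attained[OF face_of_dir_nonempty[OF assms] compact_face_of_dir[OF assms(2)]]
    by blast
  then have "x \<in> K" "c \<bullet> x = supp_fun K c"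
    unfolding face_of_dir_eq by auto
  with x(2) show ?thesis
    using supp_fun_upper[OF assms(2) \<open>x \<in> K\<close>, of "a + t *\<^sub>R c"] by (simp add: inner_add_left)
qed

lemma face_of_dir_separation:
  fixes K :: "(real^'n) set"
  assumes "K \<noteq> {}" "compact K" "supp_fun (face_of_dir K c) a < s"
  obtains \<delta> where "\<delta> > 0" "\<And>x. x \<in> K \<Longrightarrow> s \<le> a \<bullet> x \<Longrightarrow> c \<bullet> x \<le> supp_fun K c - \<delta>"
proof -
  define C where "C = K \<inter> {x. s \<le> a \<bullet> x}"
  show ?thesis
  proof (cases "C = {}")
    case True
    then show ?thesis unfolding C_def by (intro that[of 1]) auto
  next
    case False
    have "compact C"
      unfolding C_def using assms(2) closed_halfspace_ge by (intro compact_Int_closed)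
    then obtain x1 where x1: "x1 \<in> C" "supp_fun C c = c \<bullet> x1"
      and max: "\<And>y. y \<in> C \<Longrightarrow> c \<bullet> y \<le> c \<bullet> x1"
      by (rule supp_fun_attained[OF False, of c]) fast
    have "x1 \<in> K" "s \<le> a \<bullet> x1"
      using x1(1) unfolding C_def by auto
    have "c \<bullet> x1 \<noteq> supp_fun K c"
    proof
      assume "c \<bullet> x1 = supp_fun K c"
      with \<open>x1 \<in> K\<close> have "x1 \<in> face_of_dir K c"
        unfolding face_of_dir_eq by blast
      then have "a \<bullet> x1 \<le> supp_fun (face_of_dir K c) a"
        by (rule supp_fun_upper[OF compact_face_of_dir[OF assms(2)]])
      with \<open>s \<le> a \<bullet> x1\<close> assms(3) show False by linarith
    qed
    moreover have "c \<bullet> x1 \<le> supp_fun K c"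
      by (rule supp_fun_upper[OF assms(2) \<open>x1 \<in> K\<close>])
    ultimately have "supp_fun K c - c \<bullet> x1 > 0" by linarith
    moreover have "c \<bullet> x \<le> supp_fun K c - (supp_fun K c - c \<bullet> x1)" if "x \<in> K" "s \<le> a \<bullet> x" for x
      using max[of x] that unfolding C_def by simp
    ultimately show ?thesis by (rule that)
  qed
qed

lemma eventually_supp_fun_tilted_less:
  fixes K :: "(real^'n) set"
  assumes "K \<noteq> {}" "compact K" "supp_fun (face_of_dir K c) a < s"
  shows "\<forall>\<^sub>F t in at_top. supp_fun K (a + t *\<^sub>R c) < s + t * supp_fun K c"
proof -
  define h where "h = supp_fun K c"
  obtain \<delta> where \<delta>: "\<delta> > 0" "\<And>x. x \<in> K \<Longrightarrow> s \<le> a \<bullet> x \<Longrightarrow> c \<bullet> x \<le> h - \<delta>"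
    using face_of_dir_separation[OF assms] unfolding h_def by blast
  have "supp_fun K (a + t *\<^sub>R c) < s + t * h"
    if t: "t \<ge> 0" "(supp_fun K a - s) / \<delta> < t" for t
  proof -
    obtain x where x: "x \<in> K" "supp_fun K (a + t *\<^sub>R c) = a \<bullet> x + t * (c \<bullet> x)"
      using supp_fun_attained[OF assms(1,2), of "a + t *\<^sub>R c"] by (metis inner_add_left inner_scaleR_left)
    have "t * (c \<bullet> x) \<le> t * h"
      using t(1) supp_fun_upper[OF assms(2) x(1)] unfolding h_def by (simp add: mult_left_mono)
    moreover have "a \<bullet> x + t * (c \<bullet> x) < s + t * h" if "s \<le> a \<bullet> x"
    proof -
      have "t * (c \<bullet> x) \<le> t * (h - \<delta>)"
        using t(1) \<delta>(2)[OF x(1) that] by (simp add: mult_left_mono)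
      moreover have "supp_fun K a - s < t * \<delta>"
        using t(2) \<delta>(1) by (simp add: divide_less_eq mult.commute)
      ultimately show ?thesis
        using supp_fun_upper[OF assms(2) x(1), of a] by (simp add: algebra_simps)
    qed
    ultimately show ?thesis using x(2) by fastforce
  qed
  moreover have "\<forall>\<^sub>F t in at_top. t \<ge> 0 \<and> (supp_fun K a - s) / \<delta> < t"
    by (intro eventually_conj eventually_ge_at_top eventually_gt_at_top)
  ultimately show ?thesis
    unfolding h_def by (auto elim: eventually_mono)
qed

theorem lemma2p4:
  fixes K :: "(real^'n) set" and c a :: "real^'n"
  assumes "K \<noteq> {}" and "compact K"
    and "int_vec c" and "supp_fun K c \<in> \<int>"
    and "int_vec a"
  shows "\<exists>N::nat. \<forall>i::nat. i \<ge> N \<longrightarrow>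
           cg_cut K (a + real i *\<^sub>R c) \<inter> supp_hyperplane K c
           = cg_cut (face_of_dir K c) a \<inter> supp_hyperplane K c"
proof -
  define hF where "hF = supp_fun (face_of_dir K c) a"
  obtain h where h: "supp_fun K c = of_int h"
    using assms(4) by (auto elim: Ints_cases)
  have "\<forall>\<^sub>F t in at_top. supp_fun K (a + t *\<^sub>R c) < (\<lfloor>hF\<rfloor> + 1) + t * supp_fun K c"
    using eventually_supp_fun_tilted_less[OF assms(1,2)] unfolding hF_def
    by (metis floor_correct of_int_add of_int_1)
  then obtain N where N: "\<And>i. i \<ge> N \<Longrightarrow>
      supp_fun K (a + real i *\<^sub>R c) < (\<lfloor>hF\<rfloor> + 1) + real i * supp_fun K c"
    using eventually_compose_filterlim[OF _ filterlim_real_sequentially]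
    unfolding eventually_sequentially by fastforce
  have floor_eq: "\<lfloor>supp_fun K (a + real i *\<^sub>R c)\<rfloor> = \<lfloor>hF\<rfloor> + int i * h" if "i \<ge> N" for i
    using N[OF that] supp_fun_face_plus_le[OF assms(1,2), of c a "real i"]
    unfolding hF_def[symmetric] h by (intro floor_unique) (simp_all, linarith)
  show ?thesis
  proof (intro exI[of _ N] allI impI set_eqI)
    fix i :: nat and x
    assume "i \<ge> N"
    then have "(a + real i *\<^sub>R c) \<bullet> x \<le> \<lfloor>supp_fun K (a + real i *\<^sub>R c)\<rfloor>
        \<longleftrightarrow> a \<bullet> x \<le> \<lfloor>hF\<rfloor>" if "c \<bullet> x = supp_fun K c"
      using floor_eq that h by (simp add: inner_add_left)
    then show "x \<in> cg_cut K (a + real i *\<^sub>R c) \<inter> supp_hyperplane K c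
           \<longleftrightarrow> x \<in> cg_cut (face_of_dir K c) a \<inter> supp_hyperplane K c"
      unfolding cg_cut_def supp_hyperplane_def hF_def[symmetric] by blast
  qed
qed

end
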